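(* Let $\xi_1=0$ and $\xi_{n+1}=\eta_{\xi_n}(\cos(2\pi/9))$ for $n\ge1$. Then the sequence $\{\xi_n\}_{n\ge1}$ is increasing (nondecreasing) in $n$, and its limit $\xi_\infty:=\lim_{n\to\infty}\xi_n$ satisfies $0.125\le\xi_\infty\le0.13$.
   Context: For $\xi\ge0$ and $y\in(0,1)$, $\eta_\xi(y)$ is the unique positive root $\delta$ of $(2+y)\delta^2+2(2+5y-(1+\xi)^2)\delta-4(1-y)(1+\xi)^2=0$, i.e. $\eta_\xi(y)=\frac{-2-5y+(1+\xi)^2+\sqrt{(2+5y-(1+\xi)^2)^2+4(2+y)(1-y)(1+\xi)^2}}{2+y}$. *)

theory Defs
  imports "HOL-Analysis.Analysis"
begin

definition eta :: "real \<Rightarrow> real \<Rightarrow> real" where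
  "eta \<xi> y = (-2 - 5*y + (1+\<xi>)^2
      + sqrt ((2 + 5*y - (1+\<xi>)^2)^2 + 4*(2+y)*(1-y)*(1+\<xi>)^2)) / (2+y)"

(* xi_seq n represents \<xi>_{n+1} of the paper (0-based indexing) *)
fun xi_seq :: "nat \<Rightarrow> real" where
  "xi_seq 0 = 0"
| "xi_seq (Suc n) = eta (xi_seq n) (cos (2*pi/9))"

end

theory Submission
  imports Defs
begin

(*
  For fixed y in (0,1), eta \<xi> y is the positive root of a quadratic q\<^sub>\<xi>(\<delta>) with q\<^sub>\<xi>(0) < 0,
  and for \<delta> \<ge> 0 the value q\<^sub>\<xi>(\<delta>) decreases in \<xi>; so eta is increasing in \<xi>.  For
  y = cos(2 pi/9) the diagonal value q\<^sub>\<xi>(\<xi>) is positive at \<xi> = 0.13, hence eta maps [0, 0.13]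
  into itself, and the iteration started at 0 increases to a fixed point L.  A fixed point is
  a root of the cubic q\<^sub>L(L), which is negative on [0, 1/8); this gives L \<ge> 1/8.  The value of
  cos(2 pi/9) enters only through the bounds 0.766 \<le> c \<le> 0.766045, which follow from the
  triple-angle identity 4c\<^sup>3 - 3c = cos(2 pi/3) = -1/2.
*)

lemma quadratic_factor_roots:
  fixes A B C x :: real
  assumes "A \<noteq> 0" "0 \<le> B^2 + A*C"
  shows "A*x^2 + 2*B*x - C
           = A * (x - (sqrt (B^2 + A*C) - B)/A) * (x - (- sqrt (B^2 + A*C) - B)/A)"
proof -
  have "A * (x - (sqrt (B^2 + A*C) - B)/A) * (x - (- sqrt (B^2 + A*C) - B)/A)
          = ((A*x + B)^2 - (sqrt (B^2 + A*C))^2) / A"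
    using assms(1) by (simp add: field_simps power2_eq_square)
  also have "\<dots> = A*x^2 + 2*B*x - C"
    using assms by (simp add: field_simps power2_eq_square)
  finally show ?thesis ..
qed

lemma abs_less_sqrt_power2_add:
  fixes B D :: real
  assumes "0 < D"
  shows "\<bar>B\<bar> < sqrt (B^2 + D)"
  using assms real_less_rsqrt by force

lemma quadratic_pos_root:
  fixes A B C :: real
  assumes "0 < A" "0 < C"
  defines "r \<equiv> (sqrt (B^2 + A*C) - B)/A"
  shows "0 < r" and "A*r^2 + 2*B*r - C = 0"
proof -
  have "\<bar>B\<bar> < sqrt (B^2 + A*C)" using assms by (intro abs_less_sqrt_power2_add) simp
  then show "0 < r" unfolding r_def using assms(1) by (simp add: field_simps)
  show "A*r^2 + 2*B*r - C = 0"
    unfolding r_def using assms(1,2) by (subst quadratic_factor_roots) simp_all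
qed

lemma quadratic_nonpos_iff_le_pos_root:
  fixes A B C x :: real
  assumes "0 < A" "0 < C" "0 \<le> x"
  shows "A*x^2 + 2*B*x - C \<le> 0 \<longleftrightarrow> x \<le> (sqrt (B^2 + A*C) - B)/A"
proof -
  define s where "s = sqrt (B^2 + A*C)"
  define P where "P = A * (x - (- s - B)/A)"
  have "\<bar>B\<bar> < s" unfolding s_def using assms by (intro abs_less_sqrt_power2_add) simp
  moreover have "P = A*x + (s + B)"
    unfolding P_def using assms(1) by (simp add: field_simps)
  moreover have "0 \<le> A*x" using assms by simp
  ultimately have "0 < P" by (simp add: abs_less_iff)
  moreover have "A*x^2 + 2*B*x - C = P * (x - (s - B)/A)"
    unfolding P_def s_def using assms by (subst quadratic_factor_roots) simp_all
  ultimately show ?thesis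
    unfolding s_def by (simp add: mult_le_0_iff)
qed

lemma chebyshev3_strict_mono:
  fixes s t :: real
  assumes "1/2 \<le> s" "s < t"
  shows "4 * s^3 - 3 * s < 4 * t^3 - 3 * t"
proof -
  have "1/2 * (1/2) \<le> s * s" "1/2 * (1/2) \<le> s * t" "1/2 * (1/2) < t * t"
    using assms by (intro mult_mono mult_strict_mono; simp)+
  then have "0 < (t - s) * (4 * (t * t + s * t + s * s) - 3)" using assms by simp
  also have "\<dots> = (4 * t^3 - 3 * t) - (4 * s^3 - 3 * s)"
    by (simp add: algebra_simps power3_eq_cube)
  finally show ?thesis by simp
qed

lemma cos_two_pi_div_nine:
  "4 * cos (2*pi/9)^3 - 3 * cos (2*pi/9) = -1/2" "1/2 < cos (2*pi/9)"
proof -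
  have "4 * cos (2*pi/9)^3 - 3 * cos (2*pi/9) = cos (3 * (2*pi/9))"
    by (rule cos_treble_cos[symmetric])
  also have "\<dots> = -1/2" using cos_120 by (simp add: field_simps)
  finally show "4 * cos (2*pi/9)^3 - 3 * cos (2*pi/9) = -1/2" .
  have "cos (pi/3) < cos (2*pi/9)" by (rule cos_monotone_0_pi) auto
  then show "1/2 < cos (2*pi/9)" by (simp add: cos_60)
qed

lemma cos_two_pi_div_nine_bounds: "0.766 \<le> cos (2*pi/9)" "cos (2*pi/9) \<le> 0.766045"
proof -
  define c where "c = cos (2*pi/9)"
  have c: "4 * c^3 - 3 * c = -1/2" "1/2 < c" using cos_two_pi_div_nine by (simp_all add: c_def)
  have "\<not> c < 0.766"
    using chebyshev3_strict_mono[of c "0.766"] c by (auto simp: power3_eq_cube)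
  moreover have "\<not> 0.766045 < c"
    using chebyshev3_strict_mono[of "0.766045" c] c by (auto simp: power3_eq_cube)
  ultimately show "0.766 \<le> cos (2*pi/9)" "cos (2*pi/9) \<le> 0.766045"
    unfolding c_def by simp_all
qed

lemma incseq_iteration_converges_to_fixed_point:
  fixes f :: "real \<Rightarrow> real" and x :: "nat \<Rightarrow> real"
  assumes "a \<le> b" "x 0 = a" "\<And>n. x (Suc n) = f (x n)"
    and "f ` {a..b} \<subseteq> {a..b}" "mono_on {a..b} f" "continuous_on {a..b} f"
  shows "incseq x" "convergent x" "lim x \<in> {a..b}" "f (lim x) = lim x"
proof -
  have inv: "x n \<in> {a..b} \<and> x n \<le> x (Suc n)" for n
  proof (induction n)
    case 0
    then show ?case using assms(1-4) by (auto simp: image_subset_iff)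
  next
    case (Suc n)
    then have "x (Suc n) \<in> {a..b}" using assms(3,4) by (auto simp: image_subset_iff)
    moreover have "f (x n) \<le> f (x (Suc n))"
      using Suc calculation assms(5) by (auto intro: mono_onD)
    ultimately show ?case using assms(3) by simp
  qed
  then show "incseq x" by (simp add: incseq_SucI)
  moreover have "\<forall>n. x n \<le> b" using inv by simp
  ultimately obtain L where L: "x \<longlonglongrightarrow> L" by (rule incseq_convergent)
  then show "convergent x" by (auto simp: convergent_def)
  have "lim x = L" using L by (rule limI)
  have "L \<in> {a..b}"
    using inv by (auto intro!: LIMSEQ_le_const[OF L] LIMSEQ_le_const2[OF L])
  then show "lim x \<in> {a..b}" using \<open>lim x = L\<close> by simp
  have "(\<lambda>n. f (x n)) \<longlonglongrightarrow> f L"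
    using inv \<open>L \<in> {a..b}\<close> by (intro continuous_on_tendsto_compose[OF assms(6) L]) auto
  moreover have "(\<lambda>n. f (x n)) \<longlonglongrightarrow> L"
    using LIMSEQ_Suc[OF L] assms(3) by simp
  ultimately show "f (lim x) = lim x" using \<open>lim x = L\<close> LIMSEQ_unique by blast
qed

definition eta_quad :: "real \<Rightarrow> real \<Rightarrow> real \<Rightarrow> real" where
  "eta_quad \<xi> y \<delta> = (2+y)*\<delta>^2 + 2*(2+5*y-(1+\<xi>)^2)*\<delta> - 4*(1-y)*(1+\<xi>)^2"

lemma eta_eq_quadratic_pos_root:
  "eta \<xi> y = (sqrt ((2+5*y-(1+\<xi>)^2)^2 + (2+y)*(4*(1-y)*(1+\<xi>)^2)) - (2+5*y-(1+\<xi>)^2)) / (2+y)"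
  unfolding eta_def by (simp add: algebra_simps)

lemma eta_pos:
  assumes "0 \<le> \<xi>" "-2 < y" "y < 1"
  shows "0 < eta \<xi> y"
  unfolding eta_eq_quadratic_pos_root using assms
  by (intro quadratic_pos_root) (simp_all add: add_pos_nonneg)

lemma eta_quad_eta:
  assumes "0 \<le> \<xi>" "-2 < y" "y < 1"
  shows "eta_quad \<xi> y (eta \<xi> y) = 0"
  unfolding eta_eq_quadratic_pos_root eta_quad_def using assms
  by (intro quadratic_pos_root) (simp_all add: add_pos_nonneg)

lemma eta_quad_nonpos_iff:
  assumes "0 \<le> \<xi>" "-2 < y" "y < 1" "0 \<le> \<delta>"
  shows "eta_quad \<xi> y \<delta> \<le> 0 \<longleftrightarrow> \<delta> \<le> eta \<xi> y"
  unfolding eta_eq_quadratic_pos_root eta_quad_def using assms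
  by (intro quadratic_nonpos_iff_le_pos_root) (simp_all add: add_pos_nonneg)

lemma eta_quad_antimono:
  assumes "-1 \<le> \<xi>\<^sub>1" "\<xi>\<^sub>1 \<le> \<xi>\<^sub>2" "y \<le> 1" "0 \<le> \<delta>"
  shows "eta_quad \<xi>\<^sub>2 y \<delta> \<le> eta_quad \<xi>\<^sub>1 y \<delta>"
proof -
  have "(1+\<xi>\<^sub>1)^2 \<le> (1+\<xi>\<^sub>2)^2" using assms by (intro power_mono) auto
  then have "0 \<le> ((1+\<xi>\<^sub>2)^2 - (1+\<xi>\<^sub>1)^2) * (2*\<delta> + 4*(1-y))"
    using assms by simp
  moreover have "eta_quad \<xi>\<^sub>1 y \<delta> - eta_quad \<xi>\<^sub>2 y \<delta>
                   = ((1+\<xi>\<^sub>2)^2 - (1+\<xi>\<^sub>1)^2) * (2*\<delta> + 4*(1-y))"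
    unfolding eta_quad_def by (simp add: algebra_simps)
  ultimately show ?thesis by simp
qed

lemma eta_mono:
  assumes "0 \<le> \<xi>\<^sub>1" "\<xi>\<^sub>1 \<le> \<xi>\<^sub>2" "-2 < y" "y < 1"
  shows "eta \<xi>\<^sub>1 y \<le> eta \<xi>\<^sub>2 y"
proof -
  have "eta_quad \<xi>\<^sub>2 y (eta \<xi>\<^sub>1 y) \<le> eta_quad \<xi>\<^sub>1 y (eta \<xi>\<^sub>1 y)"
    using assms eta_pos[of \<xi>\<^sub>1 y] by (intro eta_quad_antimono) auto
  also have "\<dots> = 0" using assms by (intro eta_quad_eta)
  finally show ?thesis
    using assms eta_pos[of \<xi>\<^sub>1 y] eta_quad_nonpos_iff[of \<xi>\<^sub>2 y] by simp
qed

lemma continuous_on_eta: "-2 < y \<Longrightarrow> continuous_on A (\<lambda>\<xi>. eta \<xi> y)"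
  unfolding eta_def by (intro continuous_intros) auto

lemma eta_quad_diag:
  "eta_quad x y x = -2*x^3 + (5*y-6)*x^2 + (18*y-6)*x - 4*(1-y)"
  unfolding eta_quad_def by (simp add: algebra_simps power2_eq_square power3_eq_cube)

lemma eta_quad_diag_013_pos: "0.766 \<le> y \<Longrightarrow> 0 < eta_quad 0.13 y 0.13"
  unfolding eta_quad_diag by (simp add: power2_eq_square power3_eq_cube field_simps)

lemma eta_quad_diag_neg:
  assumes "1/2 \<le> y" "y \<le> 0.766045" "0 \<le> x" "x < 1/8"
  shows "eta_quad x y x < 0"
proof -
  define m where "m = (5*y-6)*(x + 1/8)"
  have "x^2 + x/8 \<le> 1/32"
    using assms power_mono[of x "1/8" 2] by (simp add: power2_eq_square)
  moreover have "(5*y-6)*(1/4) \<le> m"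
    unfolding m_def using assms by (intro mult_left_mono_neg) auto
  ultimately have "0 < -2*(x^2 + x/8 + 1/64) + m + (18*y-6)"
    using assms(1) by (simp add: field_simps)
  then have "0 < (1/8 - x) * (-2*(x^2 + x/8 + 1/64) + m + (18*y-6))"
    using assms by simp
  also have "\<dots> = eta_quad (1/8) y (1/8) - eta_quad x y x"
    unfolding eta_quad_diag m_def by (simp add: field_simps power2_eq_square power3_eq_cube)
  finally have "eta_quad x y x < eta_quad (1/8) y (1/8)" by simp
  \<comment> \<open>true only for y < 0.766049, barely above cos(2 pi/9) = 0.766044...\<close>
  also have "\<dots> < 0"
    using assms unfolding eta_quad_diag by (simp add: power2_eq_square power3_eq_cube field_simps)
  finally show ?thesis .
qed

lemma eta_less_013:
  assumes "0 \<le> \<xi>" "\<xi> \<le> 0.13" "0.766 \<le> y" "y < 1"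
  shows "eta \<xi> y < 0.13"
proof -
  have "0 < eta_quad 0.13 y 0.13" using assms by (intro eta_quad_diag_013_pos)
  also have "\<dots> \<le> eta_quad \<xi> y 0.13" using assms by (intro eta_quad_antimono) auto
  finally show ?thesis using assms eta_quad_nonpos_iff[of \<xi> y "0.13"] by auto
qed

lemma eta_fixed_point_ge_eighth:
  assumes "1/2 \<le> y" "y \<le> 0.766045" "0 \<le> L" "eta L y = L"
  shows "1/8 \<le> L"
proof (rule ccontr)
  assume "\<not> 1/8 \<le> L"
  then have "eta_quad L y L < 0" using assms by (intro eta_quad_diag_neg) auto
  moreover have "eta_quad L y (eta L y) = 0" using assms by (intro eta_quad_eta) auto
  ultimately show False using assms(4) by simp
qed

theorem lemma4p6:
  shows "mono xi_seq \<and> convergent xi_seq \<and>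
         0.125 \<le> lim xi_seq \<and> lim xi_seq \<le> 0.13"
proof -
  define y where "y = cos (2*pi/9)"
  have y: "0.766 \<le> y" "y \<le> 0.766045" using cos_two_pi_div_nine_bounds by (simp_all add: y_def)
  have "(\<lambda>\<xi>. eta \<xi> y) ` {0..0.13} \<subseteq> {0..0.13}"
    using y eta_pos eta_less_013 by (force intro: less_imp_le)
  moreover have "mono_on {0..0.13} (\<lambda>\<xi>. eta \<xi> y)"
    using y by (auto intro!: mono_onI eta_mono)
  moreover have "continuous_on {0..0.13} (\<lambda>\<xi>. eta \<xi> y)"
    using y by (intro continuous_on_eta) simp
  moreover have "xi_seq (Suc n) = eta (xi_seq n) y" for n by (simp add: y_def)
  ultimately have "incseq xi_seq" "convergent xi_seq"
    and L: "lim xi_seq \<in> {0..0.13}" "eta (lim xi_seq) y = lim xi_seq"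
    using incseq_iteration_converges_to_fixed_point[of 0 "0.13" xi_seq "\<lambda>\<xi>. eta \<xi> y"]
    by simp_all
  moreover have "1/8 \<le> lim xi_seq" using L y by (intro eta_fixed_point_ge_eighth) auto
  ultimately show ?thesis by simp
qed

end
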